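(* Let $f:\mathbb{R}^n\to\mathbb{R}$ be a differentiable cost function and suppose the $G^t$ are unbiased estimators of $\nabla f$. Let $\mathcal{E}^t$ denote the event that $\|G^t(x^t)\|_\infty\le\eta$. Then the iterates of SMGD satisfy $$\mathbb{E}\left[\sum_{i\in\Omega^t}\mathrm{sgn}\big(G^t(x^t)_i\big)\frac{\partial f}{\partial x_i}(x^t)\,\middle|\,x^t,\mathcal{E}^t\right]=\frac{1}{\eta}\|\nabla f(x^t)\|_2^2,$$ where $\Omega^t=\{i\in\{1,\dots,n\}:\Delta^t_i\neq0\}$.
   Context: SMGD: Let $\alpha>0$, $\eta>0$, $x^0\in\alpha\mathbb{Z}^n$. At step $t$ a random vector $G^t(x^t)\in\mathbb{R}^n$ is drawn; then for each coordinate $i$, conditionally on $G^t$ and $x^t$, $\Delta^t_i\in\{0,1\}$ is Bernoulli with $\mathbb{P}[\Delta^t_i=1\mid G^t,x^t]=\min(|G^t(x^t)_i|/\eta,1)$, and $x^{t+1}_i=x^t_i-\alpha\,\mathrm{sgn}(G^t(x^t)_i)\Delta^t_i$. A random function $G$ is an unbiased estimator of $\nabla f$ if $\mathbb{E}[G(x)]=\nabla f(x)$ for all $x$. Standing assumptions: $\{G^t\}$ are i.i.d. copies of an unbiased estimator $G$, each $G^t$ is independent of $x^t$, and $\mathbb{E}[G^t(x^t)\mid x^t,\mathcal{E}^t]=\nabla f(x^t)$. *)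

theory Defs
  imports "HOL-Probability.Probability"
begin

definition linf_norm :: "real ^ 'n \<Rightarrow> real" where
  "linf_norm v = Max (range (\<lambda>i. \<bar>v $ i\<bar>))"

definition cond_exp_event ::
  "'a measure \<Rightarrow> 'a set \<Rightarrow> ('a \<Rightarrow> 'b::{banach,second_countable_topology}) \<Rightarrow> 'b" where
  "cond_exp_event M A Y = (\<integral>\<omega>. indicator A \<omega> *\<^sub>R Y \<omega> \<partial>M) /\<^sub>R measure M A"

end

theory Submission
  imports Defs
begin

text \<open>On the event \<open>\<parallel>G\<parallel>\<^sub>\<infinity> \<le> \<eta>\<close> coordinate \<open>i\<close> is updated with probability exactly
  \<open>\<bar>G\<^sub>i\<bar>/\<eta>\<close>, so the thinned sign \<open>\<Delta>\<^sub>i sgn G\<^sub>i\<close> has the same conditional mean as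
  \<open>G\<^sub>i/\<eta>\<close>, namely \<open>\<nabla>\<^sub>if/\<eta>\<close>. Weighting by \<open>\<nabla>\<^sub>if\<close> and summing gives \<open>\<parallel>\<nabla>f\<parallel>\<^sup>2/\<eta>\<close>.\<close>

lemma linf_norm_le_iff: "linf_norm v \<le> c \<longleftrightarrow> (\<forall>i. \<bar>v $ i\<bar> \<le> c)"
  unfolding linf_norm_def by (simp add: finite_imageI)

lemma borel_measurable_vec_nth [measurable]:
  "(\<lambda>x::'a::topological_space ^ 'n. x $ i) \<in> borel_measurable borel"
  by (intro borel_measurable_continuous_onI continuous_intros)

lemma cond_exp_event_bounded_linear:
  assumes "bounded_linear T" "E \<in> sets M" "integrable M Y"
  shows "cond_exp_event M E (\<lambda>\<omega>. T (Y \<omega>)) = T (cond_exp_event M E Y)"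
proof -
  interpret T: bounded_linear T by fact
  have "(\<integral>\<omega>. indicator E \<omega> *\<^sub>R T (Y \<omega>) \<partial>M) = T (\<integral>\<omega>. indicator E \<omega> *\<^sub>R Y \<omega> \<partial>M)"
    using integral_bounded_linear[OF assms(1) integrable_mult_indicator[OF assms(2,3)]]
    by (simp add: T.scaleR)
  then show ?thesis
    unfolding cond_exp_event_def by (simp add: T.scaleR)
qed

lemma cond_exp_event_sum:
  assumes "E \<in> sets M" "\<And>i. i \<in> I \<Longrightarrow> integrable M (Y i)"
  shows "cond_exp_event M E (\<lambda>\<omega>. \<Sum>i\<in>I. Y i \<omega>) = (\<Sum>i\<in>I. cond_exp_event M E (Y i))"
  unfolding cond_exp_event_def scaleR_sum_right
  using assms by (subst Bochner_Integration.integral_sum) (auto intro: integrable_mult_indicator simp: scaleR_sum_right)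

lemma cond_exp_event_mult_left:
  fixes Y :: "'a \<Rightarrow> real"
  shows "cond_exp_event M E (\<lambda>\<omega>. c * Y \<omega>) = c * cond_exp_event M E Y"
  unfolding cond_exp_event_def by (simp add: mult.left_commute)

lemma (in finite_measure) integrable_bounded_real:
  fixes Y :: "'a \<Rightarrow> real"
  assumes "Y \<in> borel_measurable M" "\<And>\<omega>. \<bar>Y \<omega>\<bar> \<le> B"
  shows "integrable M Y"
  using assms by (intro integrable_const_bound[where B = B]) auto

lemma (in finite_measure) cond_exp_event_sgn_thinning:
  fixes X :: "'a \<Rightarrow> 'b::topological_space" and h :: "'b \<Rightarrow> real"
  assumes "\<eta> > 0"
    and X: "X \<in> borel_measurable M" and h: "h \<in> borel_measurable borel"
    and P: "{\<omega> \<in> space M. P \<omega>} \<in> sets M"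
    and thinning: "\<And>A. A \<in> sets borel \<Longrightarrow>
          measure M {\<omega> \<in> space M. P \<omega> \<and> X \<omega> \<in> A}
            = (\<integral>\<omega>. indicator A (X \<omega>) * min (\<bar>h (X \<omega>)\<bar> / \<eta>) 1 \<partial>M)"
    and S: "S \<in> sets borel" and h_le: "\<And>y. y \<in> S \<Longrightarrow> \<bar>h y\<bar> \<le> \<eta>"
  shows "cond_exp_event M {\<omega> \<in> space M. X \<omega> \<in> S} (\<lambda>\<omega>. if P \<omega> then sgn (h (X \<omega>)) else 0)
       = cond_exp_event M {\<omega> \<in> space M. X \<omega> \<in> S} (\<lambda>\<omega>. h (X \<omega>)) / \<eta>"
proof -
  define p where "p \<omega> = min (\<bar>h (X \<omega>)\<bar> / \<eta>) 1" for \<omega>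
  define Sp where "Sp = {y \<in> S. 0 < h y}"
  define Sm where "Sm = {y \<in> S. h y < 0}"
  have Sp: "Sp \<in> sets borel" and Sm: "Sm \<in> sets borel"
    unfolding Sp_def Sm_def using S h by measurable
  have thinned: "{\<omega> \<in> space M. P \<omega> \<and> X \<omega> \<in> B} \<in> sets M" if "B \<in> sets borel" for B
    using P X that by measurable
  have p_int: "integrable M (\<lambda>\<omega>. indicator B (X \<omega>) * p \<omega>)" if "B \<in> sets borel" for B
    using \<open>\<eta> > 0\<close> X h that
    by (intro integrable_bounded_real[where B = 1]) (auto simp: p_def indicator_def)
  have "(\<integral>\<omega>. indicator {\<omega> \<in> space M. X \<omega> \<in> S} \<omega> *\<^sub>R (if P \<omega> then sgn (h (X \<omega>)) else 0) \<partial>M)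
      = (\<integral>\<omega>. indicator {\<omega> \<in> space M. P \<omega> \<and> X \<omega> \<in> Sp} \<omega>
            - indicator {\<omega> \<in> space M. P \<omega> \<and> X \<omega> \<in> Sm} \<omega> \<partial>M)"
    by (intro Bochner_Integration.integral_cong) (auto simp: indicator_def Sp_def Sm_def sgn_real_def)
  also have "\<dots> = measure M {\<omega> \<in> space M. P \<omega> \<and> X \<omega> \<in> Sp}
                 - measure M {\<omega> \<in> space M. P \<omega> \<and> X \<omega> \<in> Sm}"
    using thinned[OF Sp] thinned[OF Sm] by (simp add: emeasure_eq_measure)
  also have "\<dots> = (\<integral>\<omega>. indicator Sp (X \<omega>) * p \<omega> - indicator Sm (X \<omega>) * p \<omega> \<partial>M)"
    using p_int[OF Sp] p_int[OF Sm] by (simp add: thinning[OF Sp] thinning[OF Sm] p_def)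
  also have "\<dots> = (\<integral>\<omega>. indicator {\<omega> \<in> space M. X \<omega> \<in> S} \<omega> *\<^sub>R h (X \<omega>) / \<eta> \<partial>M)"
  proof (intro Bochner_Integration.integral_cong)
    fix \<omega> assume "\<omega> \<in> space M"
    \<comment> \<open>on \<open>S\<close> the update probability \<open>p\<close> is \<open>\<bar>h\<bar>/\<eta>\<close>, and \<open>sgn h * \<bar>h\<bar> = h\<close>\<close>
    then show "indicator Sp (X \<omega>) * p \<omega> - indicator Sm (X \<omega>) * p \<omega>
        = indicator {\<omega> \<in> space M. X \<omega> \<in> S} \<omega> *\<^sub>R h (X \<omega>) / \<eta>"
      using \<open>\<eta> > 0\<close> h_le[of "X \<omega>"]
      by (auto simp: indicator_def Sp_def Sm_def p_def min_def field_simps)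
  qed simp
  finally show ?thesis
    unfolding cond_exp_event_def by simp
qed

theorem lemma4p5:
  fixes M :: "'a measure"
    and f :: "real ^ 'n \<Rightarrow> real"
    and x gradf :: "real ^ 'n"
    and \<eta> :: real
    and G :: "'a \<Rightarrow> real ^ 'n"
    and Dlt :: "'a \<Rightarrow> 'n \<Rightarrow> bool"
  assumes "prob_space M"
    and "\<eta> > 0"
    and diff: "\<forall>y. f differentiable (at y)"
    and grad: "GDERIV f x :> gradf"
    and G_meas: "G \<in> borel_measurable M"
    and unbiased: "integrable M G" "(\<integral>\<omega>. G \<omega> \<partial>M) = gradf"
    and Dlt_meas: "\<forall>i. {\<omega> \<in> space M. Dlt \<omega> i} \<in> sets M"
    and Dlt_bernoulli: "\<forall>i. \<forall>A \<in> sets borel.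
          measure M {\<omega> \<in> space M. Dlt \<omega> i \<and> G \<omega> \<in> A}
            = (\<integral>\<omega>. indicator A (G \<omega>) * min (\<bar>G \<omega> $ i\<bar> / \<eta>) 1 \<partial>M)"
    and E_def: "E = {\<omega> \<in> space M. linf_norm (G \<omega>) \<le> \<eta>}"
    and E_pos: "measure M E > 0"
    and cond_unbiased: "cond_exp_event M E G = gradf"
  shows "cond_exp_event M E
           (\<lambda>\<omega>. \<Sum>i\<in>{i. Dlt \<omega> i}. sgn (G \<omega> $ i) * gradf $ i)
         = (norm gradf)\<^sup>2 / \<eta>"
proof -
  interpret prob_space M by fact
  define S where "S = {g :: real ^ 'n. \<forall>i. \<bar>g $ i\<bar> \<le> \<eta>}"
  have S: "S \<in> sets borel"
    unfolding S_def by measurable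
  have E: "E = {\<omega> \<in> space M. G \<omega> \<in> S}"
    unfolding E_def S_def linf_norm_le_iff by simp
  have "E \<in> sets M"
    unfolding E using G_meas S by measurable
  define thinned_sgn where "thinned_sgn i \<omega> = (if Dlt \<omega> i then sgn (G \<omega> $ i) else 0)" for i \<omega>
  have "thinned_sgn i \<in> borel_measurable M" for i
    unfolding thinned_sgn_def using G_meas Dlt_meas[rule_format, of i] by measurable
  then have thinned_sgn_int: "integrable M (thinned_sgn i)" for i
    by (rule integrable_bounded_real[where B = 1]) (simp add: thinned_sgn_def sgn_real_def)
  have "cond_exp_event M E (thinned_sgn i) = cond_exp_event M E (\<lambda>\<omega>. G \<omega> $ i) / \<eta>" for i
    unfolding E thinned_sgn_def using \<open>\<eta> > 0\<close> G_meas Dlt_meas Dlt_bernoulli S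
    by (intro cond_exp_event_sgn_thinning) (auto simp: S_def)
  also have "cond_exp_event M E (\<lambda>\<omega>. G \<omega> $ i) = gradf $ i" for i
    using cond_exp_event_bounded_linear[OF bounded_linear_vec_nth \<open>E \<in> sets M\<close> unbiased(1)]
    by (simp add: cond_unbiased)
  finally have thinned_sgn: "cond_exp_event M E (thinned_sgn i) = gradf $ i / \<eta>" for i .
  have "(\<lambda>\<omega>. \<Sum>i\<in>{i. Dlt \<omega> i}. sgn (G \<omega> $ i) * gradf $ i)
      = (\<lambda>\<omega>. \<Sum>i\<in>UNIV. gradf $ i * thinned_sgn i \<omega>)"
    by (simp add: thinned_sgn_def if_distrib sum.If_cases mult.commute)
  then have "cond_exp_event M E (\<lambda>\<omega>. \<Sum>i\<in>{i. Dlt \<omega> i}. sgn (G \<omega> $ i) * gradf $ i)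
      = (\<Sum>i\<in>UNIV. gradf $ i * (gradf $ i / \<eta>))"
    using \<open>E \<in> sets M\<close> thinned_sgn_int
    by (simp add: cond_exp_event_sum cond_exp_event_mult_left thinned_sgn)
  then show ?thesis
    by (simp add: power2_norm_eq_inner inner_vec_def sum_divide_distrib)
qed

end
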